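(* For every integer $k\ge1$ and real $u\ge k$, $$P_k(u)=\sum_{n_1>n_2>\cdots>n_k>0}\ \prod_{i=1}^{k}\frac{z_i^{n_i}}{n_i},\qquad z_i=1-\frac{1}{u-k+i}\quad(1\le i\le k),$$ the sum running over integers $n_1,\dots,n_k$.
   Context: The functions $P_k$ are defined by $P_0(u)=1$ for $u\ge 0$, and for integers $k\ge1$, $P_k:[k,\infty)\to\mathbb{R}$ is the function with $P_k(k)=0$ and $uP_k'(u)=P_{k-1}(u-1)$ for $u\ge k$, i.e. $P_k(u)=\int_k^u P_{k-1}(x-1)\,\frac{dx}{x}$. *)

theory Defs
  imports "HOL-Analysis.Analysis"
begin

text \<open>P 0 u = 1; P (k+1) u = integral over [k+1, u] of P k (x - 1) / x.
  Only meaningful for u \<ge> k (outside, the value is irrelevant).\<close>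
fun P :: "nat \<Rightarrow> real \<Rightarrow> real" where
  "P 0 u = 1"
| "P (Suc k) u = integral {real (Suc k)..u} (\<lambda>x. P k (x - 1) / x)"

end

theory Submission
  imports Defs
begin

text \<open>Summing over the largest index first, the tail of the logarithmic series
  \<open>\<Sum>\<^sub>n\<^sub>>\<^sub>m a\<^sup>n/n = \<integral>\<^sub>0\<^sup>1 a (a t)\<^sup>m / (1 - a t) dt\<close> turns the \<open>k\<close>-fold sum with arguments
  \<open>z\<^sub>1, \<dots>, z\<^sub>k\<close> into an integral over \<open>t\<close> of the \<open>(k-1)\<close>-fold sum with arguments
  \<open>t z\<^sub>1 z\<^sub>2, z\<^sub>3, \<dots>, z\<^sub>k\<close>. The arguments \<open>b/(b+1+s), (b+1+s)/(b+2+s), (b+2+s)/(b+3+s), \<dots>\<close>,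
  which for \<open>s = 0\<close>, \<open>b = u - k\<close> are those of the theorem, form a family closed under this step,
  with \<open>(s, b)\<close> replaced by \<open>(s + b - b t + 1, b t)\<close>. The resulting recursion is the one satisfied
  by the iterated integral defining \<open>P\<^sub>k\<close> when the largest rather than the smallest variable is
  integrated out first. All sums and integrals are taken in \<open>ennreal\<close>, where Tonelli's theorem and
  monotone convergence need no integrability hypotheses.\<close>

lemma indicator_atLeastAtMost_ennreal:
  "indicator {a..b} (x::real) = (if a \<le> x \<and> x \<le> b then 1 else (0::ennreal))"
  by (simp add: indicator_def)

lemma measurable_pair_lborel_right:
  "f \<in> borel_measurable (M \<Otimes>\<^sub>M borel) \<Longrightarrow> f \<in> borel_measurable (M \<Otimes>\<^sub>M lborel)"
  by (simp add: measurable_cong_sets[OF sets_pair_measure_cong[OF refl sets_lborel] refl])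

lemma measurable_pair_lborel:
  "f \<in> borel_measurable (borel \<Otimes>\<^sub>M borel) \<Longrightarrow> f \<in> borel_measurable (lborel \<Otimes>\<^sub>M lborel)"
  by (simp add: measurable_cong_sets[OF sets_pair_measure_cong[OF sets_lborel sets_lborel] refl])

lemma has_integral_of_nn_integral:
  fixes g :: "real \<Rightarrow> real"
  assumes "g \<in> borel_measurable borel" "S \<in> sets borel" "\<And>x. x \<in> S \<Longrightarrow> 0 \<le> g x" "0 \<le> r"
    and "(\<integral>\<^sup>+x. indicator S x * ennreal (g x) \<partial>lborel) = ennreal r"
  shows "(g has_integral r) S"
proof -
  have "(\<integral>\<^sup>+x. ennreal (indicator S x * g x) \<partial>lborel) = ennreal r"
    unfolding assms(5)[symmetric] by (intro nn_integral_cong) (simp add: indicator_def)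
  then have "((\<lambda>x. indicator S x * g x) has_integral r) UNIV"
    using assms by (intro nn_integral_has_integral) (auto simp: indicator_def)
  moreover have "(\<lambda>x. indicator S x * g x) = (\<lambda>x. if x \<in> S then g x else 0)"
    by (auto simp: indicator_def)
  ultimately show ?thesis
    by (simp add: has_integral_restrict_UNIV)
qed

lemma has_sum_of_nn_integral_count_space:
  fixes f :: "'a \<Rightarrow> real"
  assumes nonneg: "\<And>x. x \<in> A \<Longrightarrow> 0 \<le> f x" and "0 \<le> r"
    and sum: "(\<integral>\<^sup>+x. ennreal (f x) \<partial>count_space A) = ennreal r"
  shows "(f has_sum r) A"
proof -
  have "integrable (count_space A) f"
    using nonneg sum by (intro integrableI_nonneg) (auto simp: AE_count_space)
  then have summable: "Infinite_Set_Sum.abs_summable_on f A"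
    by (simp add: Infinite_Set_Sum.abs_summable_on_def)
  have "infsetsum f A = r"
    using nonneg sum \<open>0 \<le> r\<close> by (subst infsetsum_conv_nn_integral) auto
  then have "infsum f A = r"
    using infsetsum_infsum[OF summable] by simp
  moreover have "f summable_on A"
    using summable by (simp add: abs_summable_summable flip: abs_summable_equivalent)
  ultimately show ?thesis
    using has_sum_infsum by blast
qed

lemma nn_integral_count_space_Sigma:
  fixes f :: "'a \<times> 'b \<Rightarrow> ennreal"
  shows "(\<integral>\<^sup>+p. f p \<partial>count_space (Sigma A B)) =
    (\<integral>\<^sup>+a. \<integral>\<^sup>+b. f (a, b) \<partial>count_space (B a) \<partial>count_space A)"
proof -
  have "(\<integral>\<^sup>+p. f p \<partial>count_space (Sigma A B)) = (\<integral>\<^sup>+p. f p * indicator (Sigma A B) p \<partial>count_space UNIV)"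
    by (rule nn_integral_count_space_indicator) simp
  also have "\<dots> = (\<integral>\<^sup>+a. \<integral>\<^sup>+b. f (a, b) * indicator (Sigma A B) (a, b) \<partial>count_space UNIV \<partial>count_space UNIV)"
    by (rule nn_integral_fst_count_space[symmetric])
  also have "\<dots> = (\<integral>\<^sup>+a. (\<integral>\<^sup>+b. f (a, b) * indicator (B a) b \<partial>count_space UNIV) * indicator A a \<partial>count_space UNIV)"
    by (rule nn_integral_cong, subst nn_integral_multc[symmetric])
       (auto simp: indicator_def intro!: nn_integral_cong)
  also have "\<dots> = (\<integral>\<^sup>+a. \<integral>\<^sup>+b. f (a, b) \<partial>count_space (B a) \<partial>count_space A)"
    by (simp add: nn_integral_count_space_indicator)
  finally show ?thesis .
qed

lemma nn_integral_monomial_unit_interval: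
  assumes "0 \<le> c"
  shows "(\<integral>\<^sup>+t. indicator {0..1} t * ennreal (c * t ^ p) \<partial>lborel) = ennreal (c / real (Suc p))"
proof -
  have "((\<lambda>t. c * t ^ p) has_integral (c / real (Suc p) * 1 ^ Suc p - c / real (Suc p) * 0 ^ Suc p)) {0..1::real}"
  proof (rule fundamental_theorem_of_calculus)
    fix x :: real
    have "((\<lambda>t. c / real (Suc p) * t ^ Suc p) has_real_derivative c * x ^ p) (at x within {0..1})"
      by (rule DERIV_cong[OF DERIV_cmult[OF DERIV_pow]]) simp
    then show "((\<lambda>t. c / real (Suc p) * t ^ Suc p) has_vector_derivative c * x ^ p) (at x within {0..1})"
      by (simp add: has_real_derivative_iff_has_vector_derivative)
  qed simp
  then have "((\<lambda>t. c * t ^ p) has_integral (c / real (Suc p))) {0..1::real}"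
    by simp
  from nn_integral_has_integral_lebesgue'[OF _ this] assms show ?thesis
    by (simp add: mult.commute)
qed

lemma mult_lt_one_unit_interval: "0 \<le> (a::real) \<Longrightarrow> a < 1 \<Longrightarrow> t \<in> {0..1} \<Longrightarrow> a * t < 1"
  by (metis atLeastAtMost_iff le_less_trans mult_right_le_one_le)

text \<open>Via \<open>a\<^sup>n/n = \<integral>\<^sub>0\<^sup>1 a\<^sup>n t\<^sup>n\<^sup>-\<^sup>1 dt\<close> and the geometric series.\<close>

lemma nn_integral_log_series_tail:
  assumes a: "0 \<le> a" "a < 1"
  shows "(\<integral>\<^sup>+n. ennreal (a ^ n / real n) \<partial>count_space {m<..}) =
    (\<integral>\<^sup>+t. indicator {0..1} t * ennreal (a / (1 - a * t)) * ennreal ((a * t) ^ m) \<partial>lborel)"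
proof -
  have bij: "bij_betw (\<lambda>j. j + Suc m) UNIV {m<..}"
    by (rule bij_betwI[where g = "\<lambda>n. n - Suc m"]) auto
  have "(\<integral>\<^sup>+n. ennreal (a ^ n / real n) \<partial>count_space {m<..}) =
      (\<Sum>j. ennreal (a ^ (j + Suc m) / real (j + Suc m)))"
    by (simp add: nn_integral_bij_count_space[OF bij, symmetric] nn_integral_count_space_nat)
  also have "\<dots> = (\<Sum>j. \<integral>\<^sup>+t. indicator {0..1} t * ennreal (a ^ (j + Suc m) * t ^ (j + m)) \<partial>lborel)"
    using a by (subst nn_integral_monomial_unit_interval) auto
  also have "\<dots> = (\<integral>\<^sup>+t. (\<Sum>j. indicator {0..1} t * ennreal (a ^ (j + Suc m) * t ^ (j + m))) \<partial>lborel)"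
    by (rule nn_integral_suminf[symmetric]) (unfold indicator_atLeastAtMost_ennreal, measurable)
  also have "\<dots> = (\<integral>\<^sup>+t. indicator {0..1} t * ennreal (a / (1 - a * t)) * ennreal ((a * t) ^ m) \<partial>lborel)"
  proof (rule nn_integral_cong)
    fix t :: real
    show "(\<Sum>j. indicator {0..1} t * ennreal (a ^ (j + Suc m) * t ^ (j + m))) =
        indicator {0..1} t * ennreal (a / (1 - a * t)) * ennreal ((a * t) ^ m)"
    proof (cases "t \<in> {0..1}")
      case True
      then have at: "a * t < 1" "0 \<le> t"
        using a mult_lt_one_unit_interval by auto
      then have "(\<lambda>j. (a * t) ^ j) sums (1 / (1 - a * t))"
        using a by (intro geometric_sums) simp
      from sums_mult[OF this, of "a * (a * t) ^ m"]
      have "(\<lambda>j. a ^ (j + Suc m) * t ^ (j + m)) sums (a / (1 - a * t) * (a * t) ^ m)"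
        by (simp add: power_add power_mult_distrib mult_ac)
      then have "(\<Sum>j. ennreal (a ^ (j + Suc m) * t ^ (j + m))) = ennreal (a / (1 - a * t) * (a * t) ^ m)"
        using a at by (subst suminf_ennreal2) (auto simp: sums_iff)
      then show ?thesis
        using True a at by (simp add: ennreal_mult[symmetric])
    qed simp
  qed
  finally show ?thesis .
qed

text \<open>\<open>Pshift k 0 w = P k (w + k)\<close>, see \<open>Pshift_0_eq_P\<close>; the offset \<open>s\<close> arises when the
  order of integration is reversed.\<close>

fun Pshift :: "nat \<Rightarrow> real \<Rightarrow> real \<Rightarrow> ennreal" where
  "Pshift 0 s b = 1"
| "Pshift (Suc k) s b =
     (\<integral>\<^sup>+v. indicator {0..b} v * ennreal (1 / (v + real (Suc k) + s)) * Pshift k s v \<partial>lborel)"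

lemma borel_measurable_Pshift: "(\<lambda>p. Pshift k (fst p) (snd p)) \<in> borel_measurable (borel \<Otimes>\<^sub>M borel)"
proof (induction k)
  case 0
  show ?case by simp
next
  case (Suc k)
  have "(\<lambda>x. (fst (fst x), snd x)) \<in> (borel \<Otimes>\<^sub>M borel) \<Otimes>\<^sub>M borel \<rightarrow>\<^sub>M borel \<Otimes>\<^sub>M borel"
    by measurable
  from measurable_compose[OF this Suc]
  have "(\<lambda>x. Pshift k (fst (fst x)) (snd x)) \<in> borel_measurable ((borel \<Otimes>\<^sub>M borel) \<Otimes>\<^sub>M borel)"
    by simp
  then have "(\<lambda>(p, v). indicator {0..snd p} v * ennreal (1 / (v + real (Suc k) + fst p)) * Pshift k (fst p) v)
      \<in> borel_measurable ((borel \<Otimes>\<^sub>M borel) \<Otimes>\<^sub>M lborel)"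
    by (intro measurable_pair_lborel_right)
       (unfold split_beta' indicator_atLeastAtMost_ennreal, measurable)
  from lborel.borel_measurable_nn_integral[OF this] show ?case by simp
qed

lemma borel_measurable_Pshift' [measurable (raw)]:
  "f \<in> borel_measurable M \<Longrightarrow> g \<in> borel_measurable M \<Longrightarrow> (\<lambda>x. Pshift k (f x) (g x)) \<in> borel_measurable M"
  using measurable_compose[OF measurable_Pair[of f M borel g borel] borel_measurable_Pshift] by simp

lemma Pshift_le_power: "0 \<le> s \<Longrightarrow> Pshift k s b \<le> ennreal (\<bar>b\<bar> ^ k)"
proof (induction k arbitrary: b)
  case 0
  then show ?case by simp
next
  case (Suc k)
  have "Pshift (Suc k) s b \<le> (\<integral>\<^sup>+v. ennreal (\<bar>b\<bar> ^ k) * indicator {0..b} v \<partial>lborel)"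
    unfolding Pshift.simps
  proof (rule nn_integral_mono)
    fix v
    show "indicator {0..b} v * ennreal (1 / (v + real (Suc k) + s)) * Pshift k s v
          \<le> ennreal (\<bar>b\<bar> ^ k) * indicator {0..b} v"
    proof (cases "v \<in> {0..b}")
      case True
      have "ennreal (1 / (v + real (Suc k) + s)) \<le> 1"
        using True Suc.prems by (auto simp: ennreal_le_1 divide_le_eq_1)
      moreover have "Pshift k s v \<le> ennreal (\<bar>b\<bar> ^ k)"
      proof -
        have "Pshift k s v \<le> ennreal (\<bar>v\<bar> ^ k)"
          using Suc by simp
        also have "\<dots> \<le> ennreal (\<bar>b\<bar> ^ k)"
          using True by (intro ennreal_leI power_mono) auto
        finally show ?thesis .
      qed
      ultimately have "ennreal (1 / (v + real (Suc k) + s)) * Pshift k s v \<le> 1 * ennreal (\<bar>b\<bar> ^ k)"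
        by (intro mult_mono) auto
      then show ?thesis
        using True by simp
    qed simp
  qed
  also have "\<dots> = ennreal (\<bar>b\<bar> ^ k) * emeasure lborel {0..b}"
    by (simp add: nn_integral_cmult_indicator)
  also have "\<dots> \<le> ennreal (\<bar>b\<bar> ^ Suc k)"
    by (cases "0 \<le> b") (simp_all add: ennreal_mult'[symmetric] mult.commute)
  finally show ?case .
qed

lemma Pshift_eq_ennreal: "0 \<le> s \<Longrightarrow> Pshift k s b = ennreal (enn2real (Pshift k s b))"
proof -
  assume "0 \<le> s"
  then have "Pshift k s b < top"
    using Pshift_le_power[of s k b] order.strict_trans1 by fastforce
  then show ?thesis by simp
qed

text \<open>The defining recursion integrates out the smallest variable of the simplex
  \<open>0 \<le> v\<^sub>k \<le> \<dots> \<le> v\<^sub>1 \<le> b\<close>; integrating out the largest one instead changes the offset \<open>s\<close>.\<close>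

lemma Pshift_Suc_reversed:
  "Pshift (Suc k) s b =
     (\<integral>\<^sup>+v. indicator {0..b} v * ennreal (1 / (v + 1 + s)) * Pshift k (s + v + 1) (b - v) \<partial>lborel)"
proof (induction k arbitrary: s b)
  case 0
  then show ?case by (simp add: add.commute add.left_commute)
next
  case (Suc k)
  let ?c = "\<lambda>x. ennreal (1 / (x + real (Suc (Suc k)) + s))"
  have "Pshift (Suc (Suc k)) s b = (\<integral>\<^sup>+x. \<integral>\<^sup>+v. indicator {0..b} x * ?c x *
      (indicator {0..x} v * ennreal (1 / (v + 1 + s)) * Pshift k (s + v + 1) (x - v)) \<partial>lborel \<partial>lborel)"
    unfolding Pshift.simps(2)[of "Suc k"] Suc.IH
    by (intro nn_integral_cong nn_integral_cmult[symmetric])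
       (unfold indicator_atLeastAtMost_ennreal, measurable)
  also have "\<dots> = (\<integral>\<^sup>+v. \<integral>\<^sup>+x. indicator {0..b} x * ?c x *
      (indicator {0..x} v * ennreal (1 / (v + 1 + s)) * Pshift k (s + v + 1) (x - v)) \<partial>lborel \<partial>lborel)"
    by (intro lborel_pair.Fubini'[symmetric] measurable_pair_lborel)
       (unfold indicator_atLeastAtMost_ennreal split_beta', measurable)
  also have "\<dots> = (\<integral>\<^sup>+v. indicator {0..b} v * ennreal (1 / (v + 1 + s)) *
      (\<integral>\<^sup>+x. indicator {v..b} x * ?c x * Pshift k (s + v + 1) (x - v) \<partial>lborel) \<partial>lborel)"
  proof (rule nn_integral_cong)
    fix v
    have "(\<integral>\<^sup>+x. indicator {0..b} x * ?c x *
        (indicator {0..x} v * ennreal (1 / (v + 1 + s)) * Pshift k (s + v + 1) (x - v)) \<partial>lborel) =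
      (\<integral>\<^sup>+x. indicator {0..b} v * ennreal (1 / (v + 1 + s)) *
        (indicator {v..b} x * ?c x * Pshift k (s + v + 1) (x - v)) \<partial>lborel)"
      by (intro nn_integral_cong) (auto simp: indicator_def mult_ac)
    also have "\<dots> = indicator {0..b} v * ennreal (1 / (v + 1 + s)) *
        (\<integral>\<^sup>+x. indicator {v..b} x * ?c x * Pshift k (s + v + 1) (x - v) \<partial>lborel)"
      by (rule nn_integral_cmult) (unfold indicator_atLeastAtMost_ennreal, measurable)
    finally show "(\<integral>\<^sup>+x. indicator {0..b} x * ?c x *
        (indicator {0..x} v * ennreal (1 / (v + 1 + s)) * Pshift k (s + v + 1) (x - v)) \<partial>lborel) =
      indicator {0..b} v * ennreal (1 / (v + 1 + s)) *
        (\<integral>\<^sup>+x. indicator {v..b} x * ?c x * Pshift k (s + v + 1) (x - v) \<partial>lborel)" .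
  qed
  also have "\<dots> = (\<integral>\<^sup>+v. indicator {0..b} v * ennreal (1 / (v + 1 + s)) *
      Pshift (Suc k) (s + v + 1) (b - v) \<partial>lborel)"
  proof (intro nn_integral_cong arg_cong2[where f = "(*)"] refl)
    fix v
    have "(\<integral>\<^sup>+x. indicator {v..b} x * ?c x * Pshift k (s + v + 1) (x - v) \<partial>lborel)
       = ennreal \<bar>1::real\<bar> * (\<integral>\<^sup>+r. indicator {v..b} (v + 1 * r) * ?c (v + 1 * r) *
           Pshift k (s + v + 1) ((v + 1 * r) - v) \<partial>lborel)"
      by (rule nn_integral_real_affine) (unfold indicator_atLeastAtMost_ennreal, measurable)
    also have "\<dots> = Pshift (Suc k) (s + v + 1) (b - v)"
      by (simp, intro nn_integral_cong) (auto simp: indicator_def algebra_simps)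
    finally show "(\<integral>\<^sup>+x. indicator {v..b} x * ?c x * Pshift k (s + v + 1) (x - v) \<partial>lborel)
       = Pshift (Suc k) (s + v + 1) (b - v)" .
  qed
  finally show ?case .
qed

lemma Pshift_Suc_rescaled:
  assumes "0 < b"
  shows "Pshift (Suc k) s b = (\<integral>\<^sup>+t. indicator {0..1} t * ennreal (b / (b - b * t + 1 + s)) *
    Pshift k (s + b - b * t + 1) (b * t) \<partial>lborel)"
proof -
  have "Pshift (Suc k) s b = ennreal \<bar>- b\<bar> * (\<integral>\<^sup>+t. indicator {0..b} (b + - b * t) *
      ennreal (1 / ((b + - b * t) + 1 + s)) * Pshift k (s + (b + - b * t) + 1) (b - (b + - b * t)) \<partial>lborel)"
    unfolding Pshift_Suc_reversed
    by (intro nn_integral_real_affine) (unfold indicator_atLeastAtMost_ennreal, measurable, use assms in simp)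
  also have "\<dots> = (\<integral>\<^sup>+t. ennreal b * (indicator {0..1} t *
      ennreal (1 / (b - b * t + 1 + s)) * Pshift k (s + b - b * t + 1) (b * t)) \<partial>lborel)"
  proof -
    have "indicator {0..b} (b + - b * t) = (indicator {0..1} t :: ennreal)" for t
      using assms by (auto simp: indicator_def zero_le_mult_iff mult_le_cancel_left1)
    then show ?thesis
      using assms by (subst nn_integral_cmult) (auto simp: algebra_simps, measurable)
  qed
  also have "\<dots> = (\<integral>\<^sup>+t. indicator {0..1} t * ennreal (b / (b - b * t + 1 + s)) *
      Pshift k (s + b - b * t + 1) (b * t) \<partial>lborel)"
  proof (intro nn_integral_cong)
    fix t
    have factor: "ennreal b * ennreal (1 / (b - b * t + 1 + s)) = ennreal (b / (b - b * t + 1 + s))"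
      using assms by (simp add: ennreal_mult'[symmetric])
    show "ennreal b * (indicator {0..1} t * ennreal (1 / (b - b * t + 1 + s)) *
        Pshift k (s + b - b * t + 1) (b * t)) = indicator {0..1} t * ennreal (b / (b - b * t + 1 + s)) *
        Pshift k (s + b - b * t + 1) (b * t)"
      unfolding factor[symmetric] by (simp only: ac_simps)
  qed
  finally show ?thesis .
qed

lemma Pshift_Suc_0:
  "Pshift (Suc k) 0 w = (\<integral>\<^sup>+x. indicator {real (Suc k)..w + real (Suc k)} x *
      ennreal (1 / x) * Pshift k 0 (x - real (Suc k)) \<partial>lborel)"
proof -
  have "Pshift (Suc k) 0 w = ennreal \<bar>1::real\<bar> * (\<integral>\<^sup>+x. indicator {0..w} (- real (Suc k) + 1 * x) *
      ennreal (1 / ((- real (Suc k) + 1 * x) + real (Suc k) + 0)) * Pshift k 0 (- real (Suc k) + 1 * x) \<partial>lborel)"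
    unfolding Pshift.simps
    by (rule nn_integral_real_affine) (unfold indicator_atLeastAtMost_ennreal, measurable)
  also have "\<dots> = (\<integral>\<^sup>+x. indicator {real (Suc k)..w + real (Suc k)} x *
      ennreal (1 / x) * Pshift k 0 (x - real (Suc k)) \<partial>lborel)"
    by (simp, intro nn_integral_cong) (simp add: indicator_def algebra_simps)
  finally show ?thesis .
qed

lemma Pshift_0_eq_P: "0 \<le> w \<Longrightarrow> Pshift k 0 w = ennreal (P k (w + real k)) \<and> 0 \<le> P k (w + real k)"
proof (induction k arbitrary: w)
  case 0
  then show ?case by simp
next
  case (Suc k)
  let ?S = "{real (Suc k)..w + real (Suc k)}"
  define g where "g x = enn2real (Pshift k 0 (x - real (Suc k))) / x" for x
  have eq: "Pshift (Suc k) 0 w = (\<integral>\<^sup>+x. indicator ?S x * ennreal (g x) \<partial>lborel)"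
    unfolding Pshift_Suc_0
  proof (intro nn_integral_cong)
    fix x
    show "indicator ?S x * ennreal (1 / x) * Pshift k 0 (x - real (Suc k)) = indicator ?S x * ennreal (g x)"
      by (cases "x \<in> ?S", subst Pshift_eq_ennreal)
         (auto simp: g_def ennreal_mult'[symmetric] divide_inverse mult.commute)
  qed
  have int: "(\<integral>\<^sup>+x. indicator ?S x * ennreal (g x) \<partial>lborel) = ennreal (enn2real (Pshift (Suc k) 0 w))"
    unfolding eq[symmetric] by (rule Pshift_eq_ennreal) simp
  have "(g has_integral enn2real (Pshift (Suc k) 0 w)) ?S"
    by (rule has_integral_of_nn_integral[OF _ _ _ _ int]) (simp_all add: g_def)
  moreover have "g x = P k (x - 1) / x" if "x \<in> ?S" for x
    using Suc.IH[of "x - real (Suc k)"] that by (simp add: g_def)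
  ultimately have "((\<lambda>x. P k (x - 1) / x) has_integral enn2real (Pshift (Suc k) 0 w)) ?S"
    by (rule has_integral_eq[rotated]) simp
  then have "P (Suc k) (w + real (Suc k)) = enn2real (Pshift (Suc k) 0 w)"
    by (simp add: integral_unique)
  then show ?case
    by (metis Pshift_eq_ennreal enn2real_nonneg order_refl)
qed

definition strict_decr_lists :: "nat \<Rightarrow> nat list set" where
  "strict_decr_lists k = {ns. length ns = k \<and> sorted_wrt (>) ns \<and> (\<forall>n\<in>set ns. 0 < n)}"

fun mpl_term :: "(nat \<Rightarrow> real) \<Rightarrow> nat list \<Rightarrow> real" where
  "mpl_term z [] = 1"
| "mpl_term z (n # ns) = z 0 ^ n / real n * mpl_term (\<lambda>i. z (Suc i)) ns"

definition mpl :: "nat \<Rightarrow> (nat \<Rightarrow> real) \<Rightarrow> ennreal" where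
  "mpl k z = (\<integral>\<^sup>+ns. ennreal (mpl_term z ns) \<partial>count_space (strict_decr_lists k))"

text \<open>A new largest entry must exceed \<open>lead ns\<close>; the value \<open>0\<close> for the empty list encodes positivity.\<close>

definition lead :: "nat list \<Rightarrow> nat" where
  "lead ns = (case ns of [] \<Rightarrow> 0 | n # _ \<Rightarrow> n)"

definition mpl_shift :: "(nat \<Rightarrow> real) \<Rightarrow> real \<Rightarrow> nat \<Rightarrow> real" where
  "mpl_shift z t = (\<lambda>i. if i = 0 then t * z 0 * z 1 else z (Suc i))"

lemma mpl_term_nonneg: "(\<And>i. 0 \<le> z i) \<Longrightarrow> 0 \<le> mpl_term z ns"
  by (induction ns arbitrary: z) auto

lemma mpl_term_eq_prod: "mpl_term z ns = (\<Prod>i<length ns. z i ^ (ns ! i) / real (ns ! i))"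
  by (induction ns arbitrary: z) (simp_all add: prod.lessThan_Suc_shift del: prod.lessThan_Suc)

lemma mpl_term_mult_lead: "mpl_term (\<lambda>i. z (Suc i)) ns * (z 0 * t) ^ lead ns = mpl_term (mpl_shift z t) ns"
proof (cases ns)
  case Nil
  then show ?thesis by (simp add: lead_def)
next
  case (Cons n ns')
  have "(\<lambda>i. mpl_shift z t (Suc i)) = (\<lambda>i. z (Suc (Suc i)))"
    by (simp add: mpl_shift_def)
  then show ?thesis
    using Cons by (simp add: lead_def mpl_shift_def power_mult_distrib mult_ac)
qed

lemma strict_decr_lists_0: "strict_decr_lists 0 = {[]}"
  by (auto simp: strict_decr_lists_def)

lemma countable_strict_decr_lists: "countable (strict_decr_lists k)"
  by (rule countable_subset[OF subset_UNIV]) simp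

lemma bij_betw_Cons_strict_decr_lists:
  "bij_betw (\<lambda>(ns, n). n # ns) (SIGMA ns:strict_decr_lists k. {lead ns<..}) (strict_decr_lists (Suc k))"
proof (rule bij_betwI')
  show "(case p of (ns, n) \<Rightarrow> n # ns) \<in> strict_decr_lists (Suc k)"
    if "p \<in> (SIGMA ns:strict_decr_lists k. {lead ns<..})" for p
    using that by (cases "fst p") (force simp: strict_decr_lists_def lead_def)+
  show "\<exists>p\<in>SIGMA ns:strict_decr_lists k. {lead ns<..}. ms = (case p of (ns, n) \<Rightarrow> n # ns)"
    if "ms \<in> strict_decr_lists (Suc k)" for ms
  proof -
    from that obtain n ns where ms: "ms = n # ns"
      by (cases ms) (auto simp: strict_decr_lists_def)
    then have "ns \<in> strict_decr_lists k" "lead ns < n"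
      using that by (cases ns; auto simp: strict_decr_lists_def lead_def)+
    then show ?thesis
      using ms by auto
  qed
qed auto

lemma mpl_0: "mpl 0 z = 1"
  by (simp add: mpl_def strict_decr_lists_0 nn_integral_count_space_finite)

lemma mpl_Suc:
  assumes z: "\<And>i. 0 \<le> z i" "\<And>i. z i < 1"
  shows "mpl (Suc k) z =
    (\<integral>\<^sup>+t. indicator {0..1} t * ennreal (z 0 / (1 - z 0 * t)) * mpl k (mpl_shift z t) \<partial>lborel)"
proof -
  let ?z' = "\<lambda>i. z (Suc i)"
  let ?c = "\<lambda>t. indicator {0..1} t * ennreal (z 0 / (1 - z 0 * t))"
  have nonneg: "0 \<le> mpl_term ?z' ns" for ns
    by (rule mpl_term_nonneg) (simp add: z)
  have "mpl (Suc k) z = (\<integral>\<^sup>+ns. \<integral>\<^sup>+n. ennreal (mpl_term z (n # ns))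
      \<partial>count_space {lead ns<..} \<partial>count_space (strict_decr_lists k))"
    unfolding mpl_def
    by (simp add: nn_integral_bij_count_space[OF bij_betw_Cons_strict_decr_lists, symmetric]
        nn_integral_count_space_Sigma)
  also have "\<dots> = (\<integral>\<^sup>+ns. ennreal (mpl_term ?z' ns) *
      (\<integral>\<^sup>+n. ennreal (z 0 ^ n / real n) \<partial>count_space {lead ns<..}) \<partial>count_space (strict_decr_lists k))"
  proof (intro nn_integral_cong)
    fix ns
    have "ennreal (mpl_term z (n # ns)) = ennreal (mpl_term ?z' ns) * ennreal (z 0 ^ n / real n)" for n
      by (simp add: ennreal_mult'[OF nonneg, symmetric] mult.commute)
    then show "(\<integral>\<^sup>+n. ennreal (mpl_term z (n # ns)) \<partial>count_space {lead ns<..}) =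
        ennreal (mpl_term ?z' ns) * (\<integral>\<^sup>+n. ennreal (z 0 ^ n / real n) \<partial>count_space {lead ns<..})"
      by (simp add: nn_integral_cmult)
  qed
  also have "\<dots> = (\<integral>\<^sup>+ns. \<integral>\<^sup>+t. ?c t * ennreal (mpl_term (mpl_shift z t) ns)
      \<partial>lborel \<partial>count_space (strict_decr_lists k))"
    using z nonneg
    by (simp add: nn_integral_log_series_tail nn_integral_cmult[symmetric] ennreal_mult'[OF nonneg]
        mpl_term_mult_lead[symmetric] mult_ac)
  also have "\<dots> = (\<integral>\<^sup>+t. \<integral>\<^sup>+ns. ?c t * ennreal (mpl_term (mpl_shift z t) ns)
      \<partial>count_space (strict_decr_lists k) \<partial>lborel)"
    by (rule nn_integral_count_space_nn_integral[symmetric, OF countable_strict_decr_lists])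
       (unfold indicator_atLeastAtMost_ennreal mpl_term_mult_lead[symmetric], measurable)
  also have "\<dots> = (\<integral>\<^sup>+t. ?c t * mpl k (mpl_shift z t) \<partial>lborel)"
    unfolding mpl_def by (simp add: nn_integral_cmult)
  finally show ?thesis .
qed

definition mpl_arg :: "real \<Rightarrow> real \<Rightarrow> nat \<Rightarrow> real" where
  "mpl_arg s b i = (if i = 0 then b / (b + 1 + s) else (b + real i + s) / (b + real i + 1 + s))"

lemma mpl_arg_nonneg: "0 \<le> s \<Longrightarrow> 0 \<le> b \<Longrightarrow> 0 \<le> mpl_arg s b i"
  by (simp add: mpl_arg_def)

lemma mpl_arg_less_1: "0 \<le> s \<Longrightarrow> 0 \<le> b \<Longrightarrow> mpl_arg s b i < 1"
  by (simp add: mpl_arg_def)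

lemma mpl_arg_0: "0 \<le> b \<Longrightarrow> mpl_arg 0 b i = 1 - 1 / (b + real (Suc i))"
  by (cases i) (simp_all add: mpl_arg_def diff_divide_eq_iff add_ac)

lemma mpl_shift_mpl_arg:
  assumes "0 \<le> s" "0 \<le> b"
  shows "mpl_shift (mpl_arg s b) t = mpl_arg (s + b - b * t + 1) (b * t)"
proof
  fix i
  show "mpl_shift (mpl_arg s b) t i = mpl_arg (s + b - b * t + 1) (b * t) i"
  proof (cases i)
    case 0
    have "b + 1 + s \<noteq> 0"
      using assms by linarith
    then have "t * (b / (b + 1 + s)) * ((b + 1 + s) / (b + 2 + s)) = b * t / (b + 2 + s)"
      by simp
    moreover have "b * t + 1 + (s + b - b * t + 1) = b + 2 + s"
      by simp
    ultimately show ?thesis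
      using 0 by (simp add: mpl_shift_def mpl_arg_def add_ac)
  next
    case (Suc j)
    then show ?thesis
      by (simp add: mpl_shift_def mpl_arg_def algebra_simps)
  qed
qed

lemma mpl_eq_Pshift: "0 \<le> s \<Longrightarrow> 0 \<le> b \<Longrightarrow> mpl k (mpl_arg s b) = Pshift k s b"
proof (induction k arbitrary: s b)
  case 0
  then show ?case by (simp add: mpl_0)
next
  case (Suc k)
  let ?z = "mpl_arg s b 0"
  have "mpl (Suc k) (mpl_arg s b) = (\<integral>\<^sup>+t. indicator {0..1} t * ennreal (?z / (1 - ?z * t)) *
      mpl k (mpl_shift (mpl_arg s b) t) \<partial>lborel)"
    using Suc.prems by (intro mpl_Suc mpl_arg_nonneg mpl_arg_less_1)
  also have "\<dots> = (\<integral>\<^sup>+t. indicator {0..1} t * ennreal (b / (b - b * t + 1 + s)) *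
      Pshift k (s + b - b * t + 1) (b * t) \<partial>lborel)"
  proof (rule nn_integral_cong)
    fix t :: real
    show "indicator {0..1} t * ennreal (?z / (1 - ?z * t)) * mpl k (mpl_shift (mpl_arg s b) t) =
        indicator {0..1} t * ennreal (b / (b - b * t + 1 + s)) * Pshift k (s + b - b * t + 1) (b * t)"
    proof (cases "t \<in> {0..1}")
      case True
      then have "b * t \<le> b" "0 \<le> b * t"
        using Suc.prems by (simp_all add: mult_left_le)
      then have "mpl k (mpl_shift (mpl_arg s b) t) = Pshift k (s + b - b * t + 1) (b * t)"
        using Suc by (simp add: mpl_shift_mpl_arg)
      moreover have "?z / (1 - ?z * t) = b / (b - b * t + 1 + s)"
      proof -
        have "0 < b + 1 + s"
          using Suc.prems by simp
        then have "1 - ?z * t = (b - b * t + 1 + s) / (b + 1 + s)"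
          by (simp add: mpl_arg_def field_simps)
        then show ?thesis
          using \<open>0 < b + 1 + s\<close> by (simp add: mpl_arg_def)
      qed
      ultimately show ?thesis
        by simp
    qed simp
  qed
  also have "\<dots> = Pshift (Suc k) s b"
  proof (cases "b = 0")
    case True
    then have "Pshift (Suc k) s b = 0"
      using Pshift_le_power[OF Suc.prems(1), of "Suc k" b] by simp
    then show ?thesis
      using True by simp
  next
    case False
    then show ?thesis
      using Suc.prems by (intro Pshift_Suc_rescaled[symmetric]) simp
  qed
  finally show ?case .
qed

theorem theorem3:
  fixes k :: nat and u :: real
  assumes "k \<ge> 1" and "u \<ge> real k"
  shows "((\<lambda>ns :: nat list. \<Prod>i\<in>{1..k}.
             (1 - 1 / (u - real k + real i)) ^ (ns ! (i - 1)) / real (ns ! (i - 1)))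
          has_sum P k u)
         {ns. length ns = k \<and> sorted_wrt (>) ns \<and> (\<forall>n\<in>set ns. n > 0)}"
proof -
  define w where "w = u - real k"
  have "0 \<le> w"
    using assms by (simp add: w_def)
  then have "mpl k (mpl_arg 0 w) = ennreal (P k u)" "0 \<le> P k u"
    using mpl_eq_Pshift[of 0 w k] Pshift_0_eq_P[of w k] by (simp_all add: w_def)
  then have "(mpl_term (mpl_arg 0 w) has_sum P k u) (strict_decr_lists k)"
    using \<open>0 \<le> w\<close> unfolding mpl_def
    by (intro has_sum_of_nn_integral_count_space mpl_term_nonneg mpl_arg_nonneg) simp_all
  moreover have "mpl_term (mpl_arg 0 w) ns =
      (\<Prod>i\<in>{1..k}. (1 - 1 / (u - real k + real i)) ^ (ns ! (i - 1)) / real (ns ! (i - 1)))"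
    if "ns \<in> strict_decr_lists k" for ns
  proof -
    have "{1..k} = Suc ` {..<k}"
      by (simp add: image_Suc_lessThan)
    then show ?thesis
      using that \<open>0 \<le> w\<close>
      by (simp add: mpl_term_eq_prod prod.reindex mpl_arg_0 w_def strict_decr_lists_def)
  qed
  ultimately show ?thesis
    unfolding strict_decr_lists_def[symmetric] by (metis (no_types, lifting) has_sum_cong)
qed

end
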